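(* Let $b>0$, $\sigma>0$, $p>0$, and let $A$, $c$, $\phi$ be as follows: $A\subseteq\mathbb{R}$ is closed with smallest element $\theta_*$; $c:A\to\mathbb{R}$ is nondecreasing and left-continuous with $c(\theta_* )=0$, $c(x)>0$ for $x>\theta_*$, and, if $A$ is unbounded, $\inf\{c(x)/x:x\in A,x\ge y\}\uparrow\infty$ as $y\uparrow\infty$; $\phi(y)=\sup_{x\in A}\{yx-c(x)\}$ for $y\ge0$. Let $\gamma(p)$ be the unique number in $(\phi_*(p),\infty)$, where $\phi_*(p)=-\inf\{\phi(y):y\in[0,p]\}$, with $\tfrac12\sigma^2\int_0^p\frac{du}{\phi(u)+\gamma(p)}=b$; let $G(v,p)=\tfrac12\sigma^2\int_0^v\frac{du}{\phi(u)+\gamma(p)}$ for $v\in[0,p]$; let $v(\cdot,p):[0,b]\to[0,p]$ be the inverse of $G(\cdot,p)$; and let $f(z,p)=\int_0^z v(y,p)\,dy$ for $z\in[0,b]$. Then $f(\cdot,p)$ is nonnegative, nondecreasing, strictly convex and belongs to $\mathcal{C}^2[0,b]$. Moreover, $f=f(\cdot,p)$ and $\gamma=\gamma(p)$ satisfy $$\gamma=\min_{x\in A}\Big\{\tfrac12\sigma^2f''(z)-xf'(z)+c(x)\Big\}\quad\text{for all }z\in(0,b),$$ together with the boundary conditions $f'(0)=0$ and $f'(b)=p$.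
   Context: $\mathcal{C}^2[0,b]$ is the space of functions $f:[0,b]\to\mathbb{R}$ that are twice continuously differentiable on $(0,b)$ with first and second derivatives having finite limits at the endpoints. The supremum defining $\phi(y)$ is finite and attained for each $y\ge0$. *)

theory Defs
  imports "HOL-Analysis.Analysis"
begin

definition strict_convex_on :: "real set \<Rightarrow> (real \<Rightarrow> real) \<Rightarrow> bool" where
  "strict_convex_on S f \<longleftrightarrow>
     (\<forall>x\<in>S. \<forall>y\<in>S. x \<noteq> y \<longrightarrow>
        (\<forall>t. 0 < t \<and> t < 1 \<longrightarrow> f (t * x + (1 - t) * y) < t * f x + (1 - t) * f y))"

definition C2_closed :: "real \<Rightarrow> (real \<Rightarrow> real) \<Rightarrow> bool" where
  "C2_closed b f \<longleftrightarrow>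
     (\<forall>z\<in>{0<..<b}. f differentiable (at z) \<and> deriv f differentiable (at z)) \<and>
     continuous_on {0<..<b} (deriv (deriv f)) \<and>
     (\<exists>L. (deriv f \<longlongrightarrow> L) (at_right 0)) \<and> (\<exists>L. (deriv f \<longlongrightarrow> L) (at_left b)) \<and>
     (\<exists>L. (deriv (deriv f) \<longlongrightarrow> L) (at_right 0)) \<and> (\<exists>L. (deriv (deriv f) \<longlongrightarrow> L) (at_left b))"

definition phi :: "real set \<Rightarrow> (real \<Rightarrow> real) \<Rightarrow> real \<Rightarrow> real" where
  "phi A c y = (SUP x\<in>A. y * x - c x)"

definition phi_star :: "real set \<Rightarrow> (real \<Rightarrow> real) \<Rightarrow> real \<Rightarrow> real" where
  "phi_star A c p = - (INF y\<in>{0..p}. phi A c y)"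

definition gamma :: "real set \<Rightarrow> (real \<Rightarrow> real) \<Rightarrow> real \<Rightarrow> real \<Rightarrow> real \<Rightarrow> real" where
  "gamma A c \<sigma> b p = (THE g. phi_star A c p < g \<and>
      (1/2) * \<sigma>\<^sup>2 * integral {0..p} (\<lambda>u. 1 / (phi A c u + g)) = b)"

definition G :: "real set \<Rightarrow> (real \<Rightarrow> real) \<Rightarrow> real \<Rightarrow> real \<Rightarrow> real \<Rightarrow> real \<Rightarrow> real" where
  "G A c \<sigma> b p v = (1/2) * \<sigma>\<^sup>2 * integral {0..v} (\<lambda>u. 1 / (phi A c u + gamma A c \<sigma> b p))"

definition vinv :: "real set \<Rightarrow> (real \<Rightarrow> real) \<Rightarrow> real \<Rightarrow> real \<Rightarrow> real \<Rightarrow> real \<Rightarrow> real" where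
  "vinv A c \<sigma> b p z = (THE v. v \<in> {0..p} \<and> G A c \<sigma> b p v = z)"

definition ff :: "real set \<Rightarrow> (real \<Rightarrow> real) \<Rightarrow> real \<Rightarrow> real \<Rightarrow> real \<Rightarrow> real \<Rightarrow> real" where
  "ff A c \<sigma> b p z = integral {0..z} (vinv A c \<sigma> b p)"

end

theory Submission
  imports Defs
begin

(* For y >= 0 the function x |-> y x - c(x) is upper semicontinuous on the closed set A
   (c is nondecreasing and left-continuous), and by the growth condition its maximisers
   over y in [0,p] stay in a compact part of A. Hence the supremum phi(y) is attained and
   phi is Lipschitz on [0,p]. The map g |-> int_0^p du / (phi(u) + g) is continuous and
   strictly decreasing on (phi_*(p), oo), tends to 0 at oo and, because phi - min phi grows
   at most linearly away from a minimiser, to oo at phi_*(p); this gives gamma(p).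
   Then G(.,p) is a C^1 bijection [0,p] -> [0,b] with positive derivative, so f' = v and
   f'' = v' = 2 (phi(v) + gamma) / sigma^2 > 0 are continuous on [0,b]. Finally
   sigma^2/2 f'' - x f' + c(x) = gamma + phi(v) - (v x - c(x)) >= gamma, with equality at a
   maximiser x of v x - c(x). *)

lemma usc_attains_sup:
  fixes h :: "'a::metric_space \<Rightarrow> real"
  assumes "compact K" "K \<noteq> {}"
    and usc: "\<And>x e. x \<in> K \<Longrightarrow> 0 < e \<Longrightarrow> \<exists>d>0. \<forall>x'\<in>K. dist x' x < d \<longrightarrow> h x' < h x + e"
  shows "\<exists>x\<in>K. \<forall>x'\<in>K. h x' \<le> h x"
proof (rule ccontr)
  (* Each point is beaten on a neighbourhood by some other point; a finite subcover of these
     neighbourhoods then produces a point that beats itself. *)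
  assume "\<not> ?thesis"
  then obtain better where better: "\<And>x. x \<in> K \<Longrightarrow> better x \<in> K \<and> h x < h (better x)"
    by (metis not_le)
  have "\<exists>d>0. \<forall>x'\<in>K. dist x' x < d \<longrightarrow> h x' < h (better x)" if "x \<in> K" for x
    using usc[OF that, of "h (better x) - h x"] better[OF that] by auto
  then obtain d where d: "\<And>x. x \<in> K \<Longrightarrow> 0 < d x"
    and below: "\<And>x x'. x \<in> K \<Longrightarrow> x' \<in> K \<Longrightarrow> dist x' x < d x \<Longrightarrow> h x' < h (better x)"
    by metis
  have "K \<subseteq> (\<Union>x\<in>K. ball x (d x))"
    using d by force
  then obtain K' where K': "K' \<subseteq> K" "finite K'" "K \<subseteq> (\<Union>x\<in>K'. ball x (d x))"
    using compactE_image[OF \<open>compact K\<close>, of K "\<lambda>x. ball x (d x)"] by blast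
  define H where "H = (\<lambda>i. h (better i)) ` K'"
  have "finite H"
    using K'(2) by (simp add: H_def)
  moreover have "H \<noteq> {}"
    using K'(3) \<open>K \<noteq> {}\<close> by (auto simp: H_def)
  ultimately have "Max H \<in> H"
    by (rule Max_in)
  then obtain j where j: "Max H = h (better j)" "j \<in> K'"
    unfolding H_def by (rule imageE)
  have j_max: "h (better i) \<le> h (better j)" if "i \<in> K'" for i
    using Max_ge[OF \<open>finite H\<close>] that j(1) by (simp add: H_def)
  have "better j \<in> K"
    using better j(2) K'(1) by blast
  then obtain i where "i \<in> K'" "dist (better j) i < d i"
    using K'(3) by (force simp: dist_commute)
  then have "h (better j) < h (better i)"
    using below K'(1) \<open>better j \<in> K\<close> by blast
  with j_max[OF \<open>i \<in> K'\<close>] show False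
    by linarith
qed

lemma has_integral_reciprocal_dist:
  fixes L e a d :: real
  assumes "0 < L" "0 < e"
  shows "((\<lambda>u. 1 / (L * \<bar>u - a\<bar> + e)) has_integral (ln (L * \<bar>d - a\<bar> + e) - ln e) / L)
           {min a d..max a d}"
proof -
  have right: "((\<lambda>u. 1 / (L * \<bar>u - a\<bar> + e)) has_integral (ln (L * (d - a) + e) - ln e) / L) {a..d}"
    if "a \<le> d" for a d
  proof -
    have "((\<lambda>u. 1 / (L * \<bar>u - a\<bar> + e)) has_integral
            ln (L * (d - a) + e) / L - ln (L * (a - a) + e) / L) {a..d}"
    proof (rule fundamental_theorem_of_calculus[OF that])
      fix x assume "x \<in> {a..d}"
      then have "0 < L * (x - a) + e"
        using assms by (simp add: add_nonneg_pos)
      then have "((\<lambda>u. ln (L * (u - a) + e) / L) has_real_derivative 1 / (L * \<bar>x - a\<bar> + e)) (at x)"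
        using assms \<open>x \<in> {a..d}\<close> by (auto intro!: derivative_eq_intros)
      then show "((\<lambda>u. ln (L * (u - a) + e) / L) has_vector_derivative
                   1 / (L * \<bar>x - a\<bar> + e)) (at x within {a..d})"
        by (simp add: has_real_derivative_iff_has_vector_derivative has_vector_derivative_at_within)
    qed
    then show ?thesis
      by (simp add: diff_divide_distrib)
  qed
  show ?thesis
  proof (cases "a \<le> d")
    case True
    then show ?thesis
      using right by simp
  next
    case False
    have "((\<lambda>u. 1 / (L * \<bar>u - - a\<bar> + e)) has_integral (ln (L * (- d - - a) + e) - ln e) / L) {-a..-d}"
      using False by (intro right) simp
    then have "((\<lambda>u. 1 / (L * \<bar>- u - a\<bar> + e)) has_integral (ln (L * \<bar>d - a\<bar> + e) - ln e) / L)
                 {-a..-d}"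
      using False by (simp add: abs_minus_commute add.commute)
    then show ?thesis
      using False has_integral_reflect_real[of "\<lambda>u. 1 / (L * \<bar>u - a\<bar> + e)"] by simp
  qed
qed

lemma MVT_deriv:
  fixes f f' :: "real \<Rightarrow> real"
  assumes cont: "continuous_on {a..b} f"
    and deriv: "\<And>x. x \<in> {a<..<b} \<Longrightarrow> (f has_real_derivative f' x) (at x)"
    and "a \<le> r" "r < s" "s \<le> b"
  shows "\<exists>z\<in>{r<..<s}. f s - f r = (s - r) * f' z"
proof -
  have "{r..s} \<subseteq> {a..b}"
    using assms by auto
  moreover have "f differentiable (at z)" if "r < z" "z < s" for z
  proof -
    have "z \<in> {a<..<b}"
      using that assms by simp
    then show ?thesis
      using deriv real_differentiable_def by blast
  qed
  ultimately obtain l z where "r < z" "z < s" "(f has_real_derivative l) (at z)" "f s - f r = (s - r) * l"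
    using MVT[OF \<open>r < s\<close> continuous_on_subset[OF cont]] by blast
  moreover have "z \<in> {a<..<b}"
    using \<open>r < z\<close> \<open>z < s\<close> assms by simp
  then have "l = f' z"
    using DERIV_unique \<open>(f has_real_derivative l) (at z)\<close> deriv by blast
  ultimately show ?thesis
    by auto
qed

lemma strict_convex_onI_less:
  fixes f :: "real \<Rightarrow> real"
  assumes "\<And>x y t. x \<in> S \<Longrightarrow> y \<in> S \<Longrightarrow> x < y \<Longrightarrow> 0 < t \<Longrightarrow> t < 1 \<Longrightarrow>
      f (t * x + (1 - t) * y) < t * f x + (1 - t) * f y"
  shows "strict_convex_on S f"
  unfolding strict_convex_on_def
proof (intro ballI impI allI)
  fix x y t :: real
  assume "x \<in> S" "y \<in> S" "x \<noteq> y" and t: "0 < t \<and> t < 1"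
  then consider "x < y" | "y < x"
    by linarith
  then show "f (t * x + (1 - t) * y) < t * f x + (1 - t) * f y"
  proof cases
    case 1
    then show ?thesis
      using assms \<open>x \<in> S\<close> \<open>y \<in> S\<close> t by blast
  next
    case 2
    then show ?thesis
      using assms[of y x "1 - t"] \<open>x \<in> S\<close> \<open>y \<in> S\<close> t by (simp add: algebra_simps)
  qed
qed

lemma strict_convex_on_realI:
  fixes f f' :: "real \<Rightarrow> real"
  assumes cont: "continuous_on {a..b} f"
    and deriv: "\<And>x. x \<in> {a<..<b} \<Longrightarrow> (f has_real_derivative f' x) (at x)"
    and mono: "strict_mono_on {a<..<b} f'"
  shows "strict_convex_on {a..b} f"
proof (rule strict_convex_onI_less)
  fix x y t :: real
  assume xy: "x \<in> {a..b}" "y \<in> {a..b}" "x < y" and t: "0 < t" "t < 1"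
  define m where "m = t * x + (1 - t) * y"
  have mx: "m - x = (1 - t) * (y - x)" and ym: "y - m = t * (y - x)"
    unfolding m_def by (simp_all add: algebra_simps)
  have "0 < (1 - t) * (y - x)"
    using t xy by simp
  then have "x < m"
    using mx by linarith
  have "0 < t * (y - x)"
    using t xy by simp
  then have "m < y"
    using ym by linarith
  obtain z1 where z1: "z1 \<in> {x<..<m}" "f m - f x = (m - x) * f' z1"
    using MVT_deriv[OF cont deriv, of x m] xy \<open>x < m\<close> \<open>m < y\<close> by auto
  obtain z2 where z2: "z2 \<in> {m<..<y}" "f y - f m = (y - m) * f' z2"
    using MVT_deriv[OF cont deriv, of m y] xy \<open>x < m\<close> \<open>m < y\<close> by auto
  have "f' z1 < f' z2"
    using z1(1) z2(1) xy by (intro strict_mono_onD[OF mono]) auto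
  then have "0 < t * (1 - t) * (y - x) * (f' z2 - f' z1)"
    using t xy by (intro mult_pos_pos) auto
  also have "\<dots> = t * f x + (1 - t) * f y - f m"
  proof -
    have e1: "f x = f m - (1 - t) * (y - x) * f' z1" and e2: "f y = f m + t * (y - x) * f' z2"
      using z1(2) z2(2) unfolding mx ym by simp_all
    show ?thesis
      unfolding e1 e2 by (simp add: algebra_simps)
  qed
  finally show "f (t * x + (1 - t) * y) < t * f x + (1 - t) * f y"
    unfolding m_def by simp
qed

lemma abs_inverse_diff_le:
  fixes a a' e :: real
  assumes "0 < e" "e \<le> a" "e \<le> a'"
  shows "\<bar>1 / a - 1 / a'\<bar> \<le> \<bar>a - a'\<bar> / e\<^sup>2"
proof -
  have "\<bar>1 / a - 1 / a'\<bar> = \<bar>a - a'\<bar> / (a * a')"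
    using assms by (simp add: field_simps abs_divide abs_minus_commute abs_mult)
  also have "\<dots> \<le> \<bar>a - a'\<bar> / e\<^sup>2"
    using assms by (auto intro!: divide_left_mono mult_mono simp: power2_eq_square)
  finally show ?thesis .
qed

lemma deriv_has_real_derivativeI:
  fixes f f' :: "real \<Rightarrow> real"
  assumes "open S" "z \<in> S"
    and "\<And>x. x \<in> S \<Longrightarrow> (f has_real_derivative f' x) (at x)"
    and "(f' has_real_derivative D) (at z)"
  shows "(deriv f has_real_derivative D) (at z)"
  using DERIV_imp_deriv[OF assms(3)]
  by (intro has_field_derivative_transform_within_open[OF assms(4,1,2)]) simp

lemma tendsto_Icc_endpoints:
  fixes g h :: "real \<Rightarrow> real"
  assumes "a < b" and h: "continuous_on {a..b} h" and eq: "\<And>z. z \<in> {a<..<b} \<Longrightarrow> g z = h z"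
  shows "(g \<longlongrightarrow> h a) (at_right a)" and "(g \<longlongrightarrow> h b) (at_left b)"
proof -
  have "\<forall>\<^sub>F z in at_right a. h z = g z"
    using eventually_at_right_real[OF \<open>a < b\<close>] by eventually_elim (simp add: eq)
  then show "(g \<longlongrightarrow> h a) (at_right a)"
    by (rule Lim_transform_eventually[OF continuous_on_Icc_at_rightD[OF h \<open>a < b\<close>]])
  have "\<forall>\<^sub>F z in at_left b. h z = g z"
    using eventually_at_left_real[OF \<open>a < b\<close>] by eventually_elim (simp add: eq)
  then show "(g \<longlongrightarrow> h b) (at_left b)"
    by (rule Lim_transform_eventually[OF continuous_on_Icc_at_leftD[OF h \<open>a < b\<close>]])
qed

lemma C2_closedI:
  fixes f f' f'' :: "real \<Rightarrow> real"
  assumes "0 < b"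
    and f': "\<And>z. z \<in> {0<..<b} \<Longrightarrow> (f has_real_derivative f' z) (at z)"
    and f'': "\<And>z. z \<in> {0<..<b} \<Longrightarrow> (f' has_real_derivative f'' z) (at z)"
    and cont': "continuous_on {0..b} f'" and cont'': "continuous_on {0..b} f''"
  shows "C2_closed b f"
proof -
  have d1: "deriv f z = f' z" if "z \<in> {0<..<b}" for z
    using f'[OF that] by (rule DERIV_imp_deriv)
  have D2: "(deriv f has_real_derivative f'' z) (at z)" if "z \<in> {0<..<b}" for z
    using f' f''[OF that] that by (intro deriv_has_real_derivativeI[of "{0<..<b}"]) auto
  have d2: "deriv (deriv f) z = f'' z" if "z \<in> {0<..<b}" for z
    using D2[OF that] by (rule DERIV_imp_deriv)
  have "continuous_on {0<..<b} f''"
    by (rule continuous_on_subset[OF cont'']) auto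
  then have "continuous_on {0<..<b} (deriv (deriv f))"
    by (rule continuous_on_eq) (simp add: d2)
  moreover have "f differentiable (at z)" "deriv f differentiable (at z)" if "z \<in> {0<..<b}" for z
    using f'[OF that] D2[OF that] by (auto simp: real_differentiable_def)
  ultimately show ?thesis
    unfolding C2_closed_def
    using tendsto_Icc_endpoints[OF \<open>0 < b\<close> cont' d1] tendsto_Icc_endpoints[OF \<open>0 < b\<close> cont'' d2]
    by blast
qed

locale reciprocal_integral =
  fixes \<psi> :: "real \<Rightarrow> real" and p L :: real
  assumes p_pos: "0 < p" and lipschitz: "L-lipschitz_on {0..p} \<psi>"
begin

definition F :: "real \<Rightarrow> real" where
  "F g = integral {0..p} (\<lambda>u. 1 / (\<psi> u + g))"

lemma min_attained:
  obtains u0 where "u0 \<in> {0..p}" "(INF u\<in>{0..p}. \<psi> u) = \<psi> u0"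
    "\<And>u. u \<in> {0..p} \<Longrightarrow> \<psi> u0 \<le> \<psi> u"
proof -
  obtain u0 where u0: "u0 \<in> {0..p}" "\<And>u. u \<in> {0..p} \<Longrightarrow> \<psi> u0 \<le> \<psi> u"
    using continuous_attains_inf[OF compact_Icc _ lipschitz_on_continuous_on[OF lipschitz]] p_pos
    by auto
  moreover have "(INF u\<in>{0..p}. \<psi> u) = \<psi> u0"
    using u0 by (intro cInf_eq_minimum) auto
  ultimately show ?thesis
    using that by blast
qed

lemma INF_le: "u \<in> {0..p} \<Longrightarrow> (INF u\<in>{0..p}. \<psi> u) \<le> \<psi> u"
  by (metis min_attained)

lemma denominator_pos: "- (INF u\<in>{0..p}. \<psi> u) < g \<Longrightarrow> u \<in> {0..p} \<Longrightarrow> 0 < \<psi> u + g"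
  using INF_le[of u] by linarith

lemma reciprocal_continuous:
  assumes "- (INF u\<in>{0..p}. \<psi> u) < g"
  shows "continuous_on {0..p} (\<lambda>u. 1 / (\<psi> u + g))"
proof -
  have "\<forall>u\<in>{0..p}. \<psi> u + g \<noteq> 0"
    using denominator_pos[OF assms] by fastforce
  then show ?thesis
    using lipschitz_on_continuous_on[OF lipschitz] by (intro continuous_intros) auto
qed

lemma F_le:
  assumes g: "- (INF u\<in>{0..p}. \<psi> u) < g"
  shows "F g \<le> p / (g + (INF u\<in>{0..p}. \<psi> u))"
proof -
  have "F g \<le> integral {0..p} (\<lambda>u. 1 / (g + (INF u\<in>{0..p}. \<psi> u)))"
    unfolding F_def
  proof (rule integral_le)
    show "(\<lambda>u. 1 / (\<psi> u + g)) integrable_on {0..p}"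
      using integrable_continuous_interval[OF reciprocal_continuous[OF g]] .
    fix u assume "u \<in> {0..p}"
    then have "g + (INF u\<in>{0..p}. \<psi> u) \<le> \<psi> u + g"
      using INF_le by simp
    then show "1 / (\<psi> u + g) \<le> 1 / (g + (INF u\<in>{0..p}. \<psi> u))"
      using g by (intro frac_le) simp_all
  qed (rule integrable_const_ivl)
  also have "\<dots> = p / (g + (INF u\<in>{0..p}. \<psi> u))"
    using p_pos by simp
  finally show ?thesis .
qed

lemma F_strict_antimono:
  assumes g: "- (INF u\<in>{0..p}. \<psi> u) < g" and "g < g'"
  shows "F g' < F g"
  unfolding F_def
proof (rule integral_less_real)
  show "continuous_on {0..p} (\<lambda>u. 1 / (\<psi> u + g'))" "continuous_on {0..p} (\<lambda>u. 1 / (\<psi> u + g))"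
    using g \<open>g < g'\<close> by (intro reciprocal_continuous; simp)+
  show "{0<..<p} \<noteq> {}"
    using p_pos by simp
  fix u assume "u \<in> {0<..<p}"
  then have "0 < \<psi> u + g"
    using denominator_pos[OF g] by simp
  then show "1 / (\<psi> u + g') < 1 / (\<psi> u + g)"
    using \<open>g < g'\<close> by (simp add: frac_less2)
qed

lemma F_continuous:
  assumes g1: "- (INF u\<in>{0..p}. \<psi> u) < g1"
  shows "continuous_on {g1..} F"
proof -
  define e where "e = g1 + (INF u\<in>{0..p}. \<psi> u)"
  have "0 < e"
    using g1 e_def by simp
  have "(p / e\<^sup>2)-lipschitz_on {g1..} F"
  proof (rule lipschitz_onI)
    fix g g' assume "g \<in> {g1..}" "g' \<in> {g1..}"
    then have cont: "continuous_on {0..p} (\<lambda>u. 1 / (\<psi> u + h))" if "h \<in> {g, g'}" for h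
      using g1 that by (intro reciprocal_continuous) auto
    have "\<bar>1 / (\<psi> u + g) - 1 / (\<psi> u + g')\<bar> \<le> \<bar>g - g'\<bar> / e\<^sup>2" if "u \<in> {0..p}" for u
      using abs_inverse_diff_le[OF \<open>0 < e\<close>, of "\<psi> u + g" "\<psi> u + g'"] INF_le[OF that]
        \<open>g \<in> {g1..}\<close> \<open>g' \<in> {g1..}\<close> by (simp add: e_def)
    moreover have "continuous_on {0..p} (\<lambda>u. 1 / (\<psi> u + g) - 1 / (\<psi> u + g'))"
      using cont by (intro continuous_on_diff) auto
    ultimately have "norm (integral {0..p} (\<lambda>u. 1 / (\<psi> u + g) - 1 / (\<psi> u + g')))
        \<le> \<bar>g - g'\<bar> / e\<^sup>2 * (p - 0)"
      using p_pos by (intro integral_bound) auto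
    moreover have "integral {0..p} (\<lambda>u. 1 / (\<psi> u + g) - 1 / (\<psi> u + g')) = F g - F g'"
      unfolding F_def using cont by (intro integral_diff integrable_continuous_interval) auto
    ultimately show "dist (F g) (F g') \<le> p / e\<^sup>2 * dist g g'"
      by (simp add: dist_real_def mult.commute)
  qed (use p_pos in simp)
  then show ?thesis
    by (rule lipschitz_on_continuous_on)
qed

(* Near a minimiser the integrand dominates 1 / (K |u - u0| + e), whose integral is of
   order ln (1/e) / K. *)
lemma F_ge_log:
  assumes "0 < K" "K-lipschitz_on {0..p} \<psi>" "0 < e"
    and u0: "u0 \<in> {0..p}" "(INF u\<in>{0..p}. \<psi> u) = \<psi> u0" and "d \<in> {0..p}"
  shows "(ln (K * \<bar>d - u0\<bar> + e) - ln e) / K \<le> F (e - \<psi> u0)"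
proof -
  define g where "g = e - \<psi> u0"
  have g: "- (INF u\<in>{0..p}. \<psi> u) < g"
    using u0(2) \<open>0 < e\<close> by (simp add: g_def)
  have int: "(\<lambda>u. 1 / (\<psi> u + g)) integrable_on {0..p}"
    using integrable_continuous_interval[OF reciprocal_continuous[OF g]] .
  have sub: "{min u0 d..max u0 d} \<subseteq> {0..p}"
    using u0(1) \<open>d \<in> {0..p}\<close> by auto
  have "(ln (K * \<bar>d - u0\<bar> + e) - ln e) / K
      = integral {min u0 d..max u0 d} (\<lambda>u. 1 / (K * \<bar>u - u0\<bar> + e))"
    using integral_unique[OF has_integral_reciprocal_dist[OF \<open>0 < K\<close> \<open>0 < e\<close>, of u0 d]] by simp
  also have "\<dots> \<le> integral {min u0 d..max u0 d} (\<lambda>u. 1 / (\<psi> u + g))"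
  proof (rule integral_le)
    show "(\<lambda>u. 1 / (K * \<bar>u - u0\<bar> + e)) integrable_on {min u0 d..max u0 d}"
      using has_integral_reciprocal_dist[OF \<open>0 < K\<close> \<open>0 < e\<close>] by blast
    show "(\<lambda>u. 1 / (\<psi> u + g)) integrable_on {min u0 d..max u0 d}"
      using integrable_on_subinterval[OF int sub] .
    fix u assume "u \<in> {min u0 d..max u0 d}"
    then have "u \<in> {0..p}"
      using sub by blast
    then have "\<psi> u - \<psi> u0 \<le> K * \<bar>u - u0\<bar>"
      using lipschitz_onD[OF assms(2) _ u0(1)] by (simp add: dist_real_def abs_le_iff)
    moreover have "0 < \<psi> u + g"
      using denominator_pos[OF g \<open>u \<in> {0..p}\<close>] .
    ultimately show "1 / (K * \<bar>u - u0\<bar> + e) \<le> 1 / (\<psi> u + g)"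
      by (simp add: g_def frac_le)
  qed
  also have "\<dots> \<le> F g"
    unfolding F_def using sub denominator_pos[OF g]
    by (intro integral_subset_le integrable_on_subinterval[OF int] int) (auto simp: less_imp_le)
  finally show ?thesis
    by (simp add: g_def)
qed

lemma F_unbounded: "\<exists>g. - (INF u\<in>{0..p}. \<psi> u) < g \<and> \<kappa> < F g"
proof -
  obtain u0 where u0: "u0 \<in> {0..p}" "(INF u\<in>{0..p}. \<psi> u) = \<psi> u0"
    using min_attained by blast
  define K where "K = max L 1"
  have "0 < K" and lipK: "K-lipschitz_on {0..p} \<psi>"
    using lipschitz_on_le[OF lipschitz] by (auto simp: K_def)
  define d where "d = (if u0 \<le> p / 2 then p else 0)"
  have "d \<in> {0..p}" and "p / 2 \<le> \<bar>d - u0\<bar>"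
    using u0(1) p_pos by (auto simp: d_def)
  define r where "r = K * (p / 2)"
  have "0 < r" and "r \<le> K * \<bar>d - u0\<bar>"
    using \<open>0 < K\<close> p_pos \<open>p / 2 \<le> \<bar>d - u0\<bar>\<close> by (simp_all add: r_def)
  define e where "e = r / exp (K * \<kappa>)"
  have "0 < e"
    using \<open>0 < r\<close> by (simp add: e_def)
  have "K * \<kappa> = ln r - ln e"
    using \<open>0 < r\<close> by (simp add: e_def ln_div)
  also have "\<dots> < ln (K * \<bar>d - u0\<bar> + e) - ln e"
    using \<open>0 < r\<close> \<open>0 < e\<close> \<open>r \<le> K * \<bar>d - u0\<bar>\<close> by simp
  finally have "\<kappa> < (ln (K * \<bar>d - u0\<bar> + e) - ln e) / K"
    using \<open>0 < K\<close> by (simp add: field_simps)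
  also have "\<dots> \<le> F (e - \<psi> u0)"
    using F_ge_log[OF \<open>0 < K\<close> lipK \<open>0 < e\<close> u0 \<open>d \<in> {0..p}\<close>] .
  finally show ?thesis
    using u0(2) \<open>0 < e\<close> by (intro exI[of _ "e - \<psi> u0"]) simp
qed

lemma F_level_exists:
  assumes "0 < \<kappa>"
  shows "\<exists>g. - (INF u\<in>{0..p}. \<psi> u) < g \<and> F g = \<kappa>"
proof -
  define m where "m = (INF u\<in>{0..p}. \<psi> u)"
  obtain g1 where g1: "- m < g1" "\<kappa> < F g1"
    using F_unbounded m_def by blast
  define g2 where "g2 = max g1 (p / \<kappa> - m) + 1"
  have "- m < g2" "g1 \<le> g2"
    using g1 by (auto simp: g2_def)
  have "p / \<kappa> < g2 + m"
    unfolding g2_def by linarith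
  moreover have "0 < p / \<kappa>"
    using p_pos assms by simp
  ultimately have "0 < g2 + m"
    by linarith
  have "p < \<kappa> * (g2 + m)"
    using \<open>p / \<kappa> < g2 + m\<close> assms by (simp add: pos_divide_less_eq mult.commute)
  with \<open>0 < g2 + m\<close> have "p / (g2 + m) < \<kappa>"
    by (simp add: pos_divide_less_eq)
  moreover have "F g2 \<le> p / (g2 + m)"
    using F_le \<open>- m < g2\<close> m_def by blast
  ultimately have "F g2 < \<kappa>"
    by linarith
  then obtain g where "g1 \<le> g" "g \<le> g2" "F g = \<kappa>"
    using IVT2'[of F g2 \<kappa> g1] g1 \<open>g1 \<le> g2\<close> continuous_on_subset[OF F_continuous[OF g1(1)[unfolded m_def]]]
    by fastforce
  then show ?thesis
    using g1 m_def by (intro exI[of _ g]) simp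
qed

lemma ex1_level:
  assumes "0 < k" "0 < \<beta>"
  shows "\<exists>!g. - (INF u\<in>{0..p}. \<psi> u) < g \<and> k * integral {0..p} (\<lambda>u. 1 / (\<psi> u + g)) = \<beta>"
proof -
  have level_iff: "k * integral {0..p} (\<lambda>u. 1 / (\<psi> u + g)) = \<beta> \<longleftrightarrow> F g = \<beta> / k" for g
    unfolding F_def using assms by (auto simp: field_simps)
  obtain g where "- (INF u\<in>{0..p}. \<psi> u) < g" "F g = \<beta> / k"
    using F_level_exists[of "\<beta> / k"] assms by auto
  then show ?thesis
    unfolding level_iff
  proof (intro ex1I[of _ g] conjI)
    fix g' assume "- (INF u\<in>{0..p}. \<psi> u) < g' \<and> F g' = \<beta> / k"
    with \<open>- (INF u\<in>{0..p}. \<psi> u) < g\<close> \<open>F g = \<beta> / k\<close> show "g' = g"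
      using F_strict_antimono[of g g'] F_strict_antimono[of g' g] by (cases g g' rule: linorder_cases) auto
  qed
qed

end

(* With k = sigma^2/2 and q = 1 / (phi + gamma), Q, v and f are the paper's G(.,p), v(.,p)
   and f(.,p). *)
locale primitive_inverse =
  fixes k p :: real and q :: "real \<Rightarrow> real"
  assumes k_pos: "0 < k" and p_pos: "0 < p"
    and q_continuous: "continuous_on {0..p} q" and q_pos: "\<And>u. u \<in> {0..p} \<Longrightarrow> 0 < q u"
begin

definition Q :: "real \<Rightarrow> real" where
  "Q u = k * integral {0..u} q"

definition v :: "real \<Rightarrow> real" where
  "v z = (THE u. u \<in> {0..p} \<and> Q u = z)"

definition f :: "real \<Rightarrow> real" where
  "f z = integral {0..z} v"

lemma Q_has_derivative: "u \<in> {0..p} \<Longrightarrow> (Q has_real_derivative k * q u) (at u within {0..p})"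
  unfolding Q_def[abs_def] by (intro DERIV_cmult integral_has_real_derivative q_continuous)

lemma Q_continuous: "continuous_on {0..p} Q"
  using Q_has_derivative by (rule DERIV_continuous_on)

lemma Q_0 [simp]: "Q 0 = 0"
  by (simp add: Q_def)

lemma Q_strict_mono: "strict_mono_on {0..p} Q"
proof (rule strict_mono_onI)
  fix u u' assume u: "u \<in> {0..p}" "u' \<in> {0..p}" "u < u'"
  have "integral {0..u} q + integral {u..u'} q = integral {0..u'} q"
    using u by (intro Henstock_Kurzweil_Integration.integral_combine integrable_continuous_interval
        continuous_on_subset[OF q_continuous]) auto
  moreover have "integral {u..u'} (\<lambda>_. 0) < integral {u..u'} q"
    using u by (intro integral_less_real continuous_on_subset[OF q_continuous]) (auto intro: q_pos)
  ultimately show "Q u < Q u'"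
    unfolding Q_def using k_pos by simp
qed

lemma Q_p_pos: "0 < Q p"
  using strict_mono_onD[OF Q_strict_mono, of 0 p] p_pos by simp

lemma ex1_preimage: "z \<in> {0..Q p} \<Longrightarrow> \<exists>!u. u \<in> {0..p} \<and> Q u = z"
  using IVT'[of Q 0 z p] Q_continuous p_pos strict_mono_on_eqD[OF Q_strict_mono]
  by (metis Q_0 atLeastAtMost_iff less_eq_real_def)

lemma Q_v: "z \<in> {0..Q p} \<Longrightarrow> v z \<in> {0..p} \<and> Q (v z) = z"
  unfolding v_def by (rule theI'[OF ex1_preimage])

lemma v_Q: "u \<in> {0..p} \<Longrightarrow> v (Q u) = u"
  unfolding v_def using strict_mono_on_eqD[OF Q_strict_mono] by (intro the_equality) auto

lemma Q_image: "Q ` {0..p} = {0..Q p}"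
proof
  show "Q ` {0..p} \<subseteq> {0..Q p}"
    using strict_mono_on_leD[OF Q_strict_mono] by (force simp: p_pos less_imp_le)
  show "{0..Q p} \<subseteq> Q ` {0..p}"
    using Q_v by (metis image_eqI subsetI)
qed

lemma v_continuous: "continuous_on {0..Q p} v"
  using continuous_on_inv[OF Q_continuous compact_Icc] v_Q Q_image by simp

lemma v_strict_mono: "strict_mono_on {0..Q p} v"
proof (rule strict_mono_onI, rule ccontr)
  fix z z' assume z: "z \<in> {0..Q p}" "z' \<in> {0..Q p}" "z < z'" and "\<not> v z < v z'"
  then have "Q (v z') \<le> Q (v z)"
    using Q_v by (intro strict_mono_on_leD[OF Q_strict_mono]) auto
  with z show False
    using Q_v by simp
qed

lemma v_0 [simp]: "v 0 = 0"
  using v_Q[of 0] p_pos by simp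

lemma v_Q_p [simp]: "v (Q p) = p"
  using v_Q[of p] p_pos by simp

lemma v_has_derivative:
  assumes z: "z \<in> {0<..<Q p}"
  shows "(v has_real_derivative 1 / (k * q (v z))) (at z)"
proof -
  have "v z \<in> {0<..<p}"
    using strict_mono_onD[OF v_strict_mono, of 0 z] strict_mono_onD[OF v_strict_mono, of z "Q p"] z
    by auto
  then have "(Q has_real_derivative k * q (v z)) (at (v z))"
    using Q_has_derivative[of "v z"] at_within_interior[of "v z" "{0..p}"] by simp
  moreover have "k * q (v z) \<noteq> 0"
    using k_pos q_pos[of "v z"] \<open>v z \<in> {0<..<p}\<close> by auto
  moreover have "isCont v z"
    using continuous_on_interior[OF v_continuous] z by simp
  ultimately have "(v has_real_derivative inverse (k * q (v z))) (at z)"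
    using z Q_v by (intro DERIV_inverse_function[where a = 0 and b = "Q p"]) auto
  then show ?thesis
    by (simp add: inverse_eq_divide)
qed

lemma v_derivative_continuous: "continuous_on {0..Q p} (\<lambda>z. 1 / (k * q (v z)))"
  using Q_v k_pos q_pos
  by (intro continuous_intros continuous_on_compose2[OF q_continuous v_continuous])
     (auto simp: less_imp_neq[symmetric])

lemma f_has_derivative: "z \<in> {0..Q p} \<Longrightarrow> (f has_real_derivative v z) (at z within {0..Q p})"
  unfolding f_def[abs_def] by (rule integral_has_real_derivative[OF v_continuous])

lemma f_has_derivative_at: "z \<in> {0<..<Q p} \<Longrightarrow> (f has_real_derivative v z) (at z)"
  using f_has_derivative[of z] at_within_interior[of z "{0..Q p}"] by simp

lemma deriv_f: "z \<in> {0<..<Q p} \<Longrightarrow> deriv f z = v z"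
  by (rule DERIV_imp_deriv[OF f_has_derivative_at])

lemma deriv_deriv_f: "z \<in> {0<..<Q p} \<Longrightarrow> deriv (deriv f) z = 1 / (k * q (v z))"
  using f_has_derivative_at v_has_derivative
  by (intro DERIV_imp_deriv deriv_has_real_derivativeI[of "{0<..<Q p}"]) auto

lemma f_nonneg: "z \<in> {0..Q p} \<Longrightarrow> 0 \<le> f z"
  unfolding f_def using Q_v
  by (intro integral_nonneg integrable_continuous_interval continuous_on_subset[OF v_continuous]) auto

lemma f_mono: "mono_on {0..Q p} f"
proof (rule mono_onI)
  fix r s assume "r \<in> {0..Q p}" "s \<in> {0..Q p}" "r \<le> s"
  then show "f r \<le> f s"
    unfolding f_def using Q_v
    by (intro integral_subset_le integrable_continuous_interval continuous_on_subset[OF v_continuous])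
       auto
qed

lemma f_strict_convex: "strict_convex_on {0..Q p} f"
proof (rule strict_convex_on_realI[OF _ f_has_derivative_at])
  show "continuous_on {0..Q p} f"
    using f_has_derivative by (rule DERIV_continuous_on)
  show "strict_mono_on {0<..<Q p} v"
    using v_strict_mono by (rule monotone_on_subset) auto
qed

lemma f_C2_closed: "C2_closed (Q p) f"
  using Q_p_pos f_has_derivative_at v_has_derivative v_continuous v_derivative_continuous
  by (rule C2_closedI)

lemma f_right_derivative_0: "(f has_real_derivative 0) (at_right 0)"
  using f_has_derivative[of 0] at_within_Icc_at_right[OF Q_p_pos] Q_p_pos by simp

lemma f_left_derivative_Q_p: "(f has_real_derivative p) (at_left (Q p))"
  using f_has_derivative[of "Q p"] at_within_Icc_at_left[OF Q_p_pos] Q_p_pos by simp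

end

locale cost_function =
  fixes A :: "real set" and c :: "real \<Rightarrow> real" and \<theta> :: real
  assumes closed_A: "closed A"
    and \<theta>_in: "\<theta> \<in> A" and \<theta>_least: "\<And>x. x \<in> A \<Longrightarrow> \<theta> \<le> x"
    and c_mono: "mono_on A c"
    and c_left_continuous: "\<And>x. x \<in> A \<Longrightarrow> continuous (at x within (A \<inter> {..x})) c"
    and c_\<theta>: "c \<theta> = 0"
    and c_growth: "\<not> bdd_above A \<Longrightarrow>
      filterlim (\<lambda>y. Inf {c x / x | x. x \<in> A \<and> x \<ge> y}) at_top at_top"
begin

lemma c_nonneg: "x \<in> A \<Longrightarrow> 0 \<le> c x"
  using mono_onD[OF c_mono \<theta>_in] \<theta>_least c_\<theta> by fastforce

lemma cost_superlinear:
  assumes "\<not> bdd_above A"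
  obtains Y where "0 < Y" "\<And>x. x \<in> A \<Longrightarrow> Y < x \<Longrightarrow> M * x \<le> c x"
proof -
  have "\<forall>\<^sub>F y in at_top. M \<le> Inf {c x / x | x. x \<in> A \<and> x \<ge> y}"
    using c_growth[OF assms] by (simp add: filterlim_at_top)
  then obtain N where N: "\<And>y. N \<le> y \<Longrightarrow> M \<le> Inf {c x / x | x. x \<in> A \<and> x \<ge> y}"
    by (auto simp: eventually_at_top_linorder)
  define Y where "Y = max N 1"
  have "M * x \<le> c x" if x: "x \<in> A" "Y < x" for x
  proof -
    have "0 < x"
      using x by (simp add: Y_def)
    have "bdd_below {c x / x | x. x \<in> A \<and> x \<ge> Y}"
      using c_nonneg by (force intro!: bdd_belowI[of _ 0] simp: Y_def)
    then have "Inf {c x / x | x. x \<in> A \<and> x \<ge> Y} \<le> c x / x"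
      using x by (intro cInf_lower) auto
    moreover have "M \<le> Inf {c x / x | x. x \<in> A \<and> x \<ge> Y}"
      by (rule N) (simp add: Y_def)
    ultimately have "M \<le> c x / x"
      by linarith
    then show ?thesis
      using \<open>0 < x\<close> by (simp add: pos_le_divide_eq)
  qed
  then show ?thesis
    using that[of Y] by (simp add: Y_def)
qed

lemma large_points_suboptimal:
  assumes "0 \<le> p"
  obtains Y where "\<theta> \<le> Y" "\<And>y x. y \<in> {0..p} \<Longrightarrow> x \<in> A \<Longrightarrow> Y < x \<Longrightarrow> y * x - c x < y * \<theta>"
proof (cases "bdd_above A")
  case True
  then obtain B where "\<And>x. x \<in> A \<Longrightarrow> x \<le> B"
    by (auto simp: bdd_above_def)
  then show ?thesis
    using that[of "max \<theta> B"] by fastforce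
next
  case False
  obtain Y0 where "0 < Y0" and Y0: "\<And>x. x \<in> A \<Longrightarrow> Y0 < x \<Longrightarrow> (p + 1) * x \<le> c x"
    using cost_superlinear[OF False, of "p + 1"] by metis
  define Y where "Y = max Y0 (max \<theta> (p * \<bar>\<theta>\<bar>))"
  show ?thesis
  proof (rule that[of Y])
    show "\<theta> \<le> Y"
      by (simp add: Y_def)
    fix y x assume y: "y \<in> {0..p}" and x: "x \<in> A" "Y < x"
    have "y * x \<le> p * x"
      using y x \<open>0 < Y0\<close> by (simp add: Y_def mult_right_mono)
    then have "y * x - c x \<le> - x"
      using Y0[OF x(1)] x(2) by (simp add: Y_def algebra_simps)
    also have "\<dots> < - (p * \<bar>\<theta>\<bar>)"
      using x by (simp add: Y_def)
    also have "\<dots> \<le> y * \<theta>"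
    proof -
      have "y * \<bar>\<theta>\<bar> \<le> p * \<bar>\<theta>\<bar>"
        using y by (simp add: mult_right_mono)
      moreover have "- (y * \<bar>\<theta>\<bar>) \<le> y * \<theta>"
        using y mult_left_mono[of "- \<bar>\<theta>\<bar>" \<theta> y] by simp
      ultimately show ?thesis
        by linarith
    qed
    finally show "y * x - c x < y * \<theta>" .
  qed
qed

lemma payoff_upper_semicontinuous:
  assumes "0 \<le> y" "x \<in> A" "0 < e"
  shows "\<exists>d>0. \<forall>x'\<in>A. dist x' x < d \<longrightarrow> y * x' - c x' < y * x - c x + e"
proof -
  obtain d1 where d1: "0 < d1" "\<forall>x'\<in>A \<inter> {..x}. dist x' x < d1 \<longrightarrow> dist (c x') (c x) < e"
    using c_left_continuous[OF \<open>x \<in> A\<close>] \<open>0 < e\<close> unfolding continuous_within_eps_delta by metis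
  define d where "d = min d1 (e / (y + 1))"
  have "0 < d"
    using d1 assms by (simp add: d_def)
  moreover have "y * x' - c x' < y * x - c x + e" if "x' \<in> A" "dist x' x < d" for x'
  proof (cases "x' \<le> x")
    case True
    then have "\<bar>c x' - c x\<bar> < e"
      using d1(2) that by (simp add: d_def dist_real_def)
    moreover have "y * x' \<le> y * x"
      using True \<open>0 \<le> y\<close> by (simp add: mult_left_mono)
    ultimately show ?thesis
      by linarith
  next
    case False
    then have "c x \<le> c x'"
      using mono_onD[OF c_mono \<open>x \<in> A\<close> \<open>x' \<in> A\<close>] by simp
    have "x' - x \<le> e / (y + 1)"
      using that False by (simp add: d_def dist_real_def)
    then have "y * (x' - x) \<le> y * (e / (y + 1))"
      using \<open>0 \<le> y\<close> by (rule mult_left_mono)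
    also have "\<dots> < e"
      using assms by (simp add: field_simps)
    finally show ?thesis
      using \<open>c x \<le> c x'\<close> by (simp add: algebra_simps)
  qed
  ultimately show ?thesis
    by blast
qed

lemma bounded_maximizers:
  assumes "0 \<le> p"
  obtains Y where "\<And>y. y \<in> {0..p} \<Longrightarrow> \<exists>x\<in>A \<inter> {\<theta>..Y}. \<forall>x'\<in>A. y * x' - c x' \<le> y * x - c x"
proof -
  obtain Y where Y: "\<theta> \<le> Y" "\<And>y x. y \<in> {0..p} \<Longrightarrow> x \<in> A \<Longrightarrow> Y < x \<Longrightarrow> y * x - c x < y * \<theta>"
    using large_points_suboptimal[OF assms] by blast
  have "\<exists>x\<in>A \<inter> {\<theta>..Y}. \<forall>x'\<in>A. y * x' - c x' \<le> y * x - c x" if y: "y \<in> {0..p}" for y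
  proof -
    have "compact (A \<inter> {\<theta>..Y})"
      by (rule closed_Int_compact[OF closed_A compact_Icc])
    moreover have "A \<inter> {\<theta>..Y} \<noteq> {}"
      using \<theta>_in Y(1) by auto
    moreover have "\<exists>d>0. \<forall>x'\<in>A \<inter> {\<theta>..Y}. dist x' x < d \<longrightarrow> y * x' - c x' < y * x - c x + e"
      if "x \<in> A \<inter> {\<theta>..Y}" "0 < e" for x e
      using payoff_upper_semicontinuous[of y x e] y that by fastforce
    ultimately obtain l where l: "l \<in> A \<inter> {\<theta>..Y}"
      and l_max: "\<And>x'. x' \<in> A \<inter> {\<theta>..Y} \<Longrightarrow> y * x' - c x' \<le> y * l - c l"
      using usc_attains_sup[of "A \<inter> {\<theta>..Y}" "\<lambda>x. y * x - c x"] by blast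
    have "y * x' - c x' \<le> y * l - c l" if "x' \<in> A" for x'
    proof (cases "x' \<le> Y")
      case True
      then show ?thesis
        using l_max \<theta>_least that by simp
    next
      case False
      then have "y * x' - c x' < y * \<theta> - c \<theta>"
        using Y(2) y that c_\<theta> by simp
      also have "\<dots> \<le> y * l - c l"
        using l_max \<theta>_in Y(1) by simp
      finally show ?thesis
        by simp
    qed
    with l show ?thesis
      by blast
  qed
  then show ?thesis
    using that by blast
qed

lemma phi_eq_maximum:
  "x \<in> A \<Longrightarrow> (\<And>x'. x' \<in> A \<Longrightarrow> y * x' - c x' \<le> y * x - c x) \<Longrightarrow> phi A c y = y * x - c x"
  unfolding phi_def by (rule cSup_eq_maximum) auto

lemma phi_maximizer:
  assumes "0 \<le> y"
  obtains x where "x \<in> A" "phi A c y = y * x - c x" "\<And>x'. x' \<in> A \<Longrightarrow> y * x' - c x' \<le> phi A c y"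
proof -
  obtain Y where "\<And>y'. y' \<in> {0..y} \<Longrightarrow> \<exists>x\<in>A \<inter> {\<theta>..Y}. \<forall>x'\<in>A. y' * x' - c x' \<le> y' * x - c x"
    using bounded_maximizers[OF assms] by blast
  then obtain x where "x \<in> A" "\<And>x'. x' \<in> A \<Longrightarrow> y * x' - c x' \<le> y * x - c x"
    using assms by force
  then show ?thesis
    using that phi_eq_maximum by metis
qed

lemma min_attained_at_maximizer:
  assumes "0 \<le> v" and E: "\<And>x. E x = \<gamma> + (phi A c v - (v * x - c x))"
  shows "(\<exists>x\<in>A. \<gamma> = E x) \<and> (\<forall>x\<in>A. \<gamma> \<le> E x)"
proof -
  obtain x where "x \<in> A" "phi A c v = v * x - c x" "\<And>x'. x' \<in> A \<Longrightarrow> v * x' - c x' \<le> phi A c v"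
    using phi_maximizer[OF assms(1)] by blast
  then show ?thesis
    unfolding E by (auto intro!: bexI[of _ x])
qed

lemma phi_upper: "0 \<le> y \<Longrightarrow> x \<in> A \<Longrightarrow> y * x - c x \<le> phi A c y"
  by (metis phi_maximizer)

lemma phi_lipschitz:
  assumes "0 \<le> p"
  shows "\<exists>L. L-lipschitz_on {0..p} (phi A c)"
proof -
  obtain Y where Y: "\<And>y. y \<in> {0..p} \<Longrightarrow> \<exists>x\<in>A \<inter> {\<theta>..Y}. \<forall>x'\<in>A. y * x' - c x' \<le> y * x - c x"
    using bounded_maximizers[OF assms] by blast
  define M where "M = max \<bar>\<theta>\<bar> \<bar>Y\<bar>"
  have one_sided: "phi A c y - phi A c y' \<le> M * \<bar>y - y'\<bar>"
    if y: "y \<in> {0..p}" and y': "y' \<in> {0..p}" for y y'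
  proof -
    obtain x where x: "x \<in> A \<inter> {\<theta>..Y}" "\<And>x'. x' \<in> A \<Longrightarrow> y * x' - c x' \<le> y * x - c x"
      using Y[OF y] by blast
    have "y' * x - c x \<le> phi A c y'"
      using phi_upper y' x(1) by simp
    then have "phi A c y - phi A c y' \<le> (y * x - c x) - (y' * x - c x)"
      using phi_eq_maximum[of x y] x by force
    also have "\<dots> \<le> \<bar>y - y'\<bar> * \<bar>x\<bar>"
      by (metis abs_ge_self abs_mult left_diff_distrib diff_diff_eq2 diff_add_cancel)
    also have "\<dots> \<le> \<bar>y - y'\<bar> * M"
      using x(1) by (intro mult_left_mono) (auto simp: M_def)
    finally show ?thesis
      by (simp add: mult.commute)
  qed
  have "M-lipschitz_on {0..p} (phi A c)"
  proof (rule lipschitz_onI)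
    fix y y' assume "y \<in> {0..p}" "y' \<in> {0..p}"
    then show "dist (phi A c y) (phi A c y') \<le> M * dist y y'"
      using one_sided[of y y'] one_sided[of y' y] by (simp add: dist_real_def abs_le_iff abs_minus_commute)
  qed (simp add: M_def)
  then show ?thesis
    by blast
qed

lemma reciprocal_integral_phi:
  assumes "0 < p"
  obtains L where "reciprocal_integral (phi A c) p L"
  using phi_lipschitz[of p] assms by (metis less_imp_le reciprocal_integral.intro)

lemma gamma_spec:
  assumes "0 < p" "0 < b" "0 < \<sigma>"
  shows "phi_star A c p < gamma A c \<sigma> b p"
    and "(1/2) * \<sigma>\<^sup>2 * integral {0..p} (\<lambda>u. 1 / (phi A c u + gamma A c \<sigma> b p)) = b"
proof -
  obtain L where "reciprocal_integral (phi A c) p L"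
    using reciprocal_integral_phi[OF assms(1)] .
  then have "\<exists>!g. phi_star A c p < g \<and> (1/2) * \<sigma>\<^sup>2 * integral {0..p} (\<lambda>u. 1 / (phi A c u + g)) = b"
    unfolding phi_star_def using assms by (intro reciprocal_integral.ex1_level) auto
  from theI'[OF this] show "phi_star A c p < gamma A c \<sigma> b p"
    and "(1/2) * \<sigma>\<^sup>2 * integral {0..p} (\<lambda>u. 1 / (phi A c u + gamma A c \<sigma> b p)) = b"
    unfolding gamma_def by auto
qed

lemma primitive_inverse_gamma:
  assumes "0 < p" "0 < b" "0 < \<sigma>"
  shows "primitive_inverse ((1/2) * \<sigma>\<^sup>2) p (\<lambda>u. 1 / (phi A c u + gamma A c \<sigma> b p))"
proof -
  obtain L where "reciprocal_integral (phi A c) p L"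
    using reciprocal_integral_phi[OF assms(1)] .
  then interpret reciprocal_integral "phi A c" p L .
  have "- (INF u\<in>{0..p}. phi A c u) < gamma A c \<sigma> b p"
    using gamma_spec(1)[OF assms] by (simp add: phi_star_def)
  then show ?thesis
    using assms reciprocal_continuous denominator_pos by unfold_locales auto
qed

end

theorem proposition7:
  fixes A :: "real set" and c :: "real \<Rightarrow> real" and b \<sigma> p \<theta> :: real
  assumes b_pos: "b > 0" and sigma_pos: "\<sigma> > 0" and p_pos: "p > 0"
    and A_closed: "closed A"
    and theta_min: "\<theta> \<in> A" "\<forall>x\<in>A. \<theta> \<le> x"
    and c_mono: "mono_on A c"
    and c_leftcont: "\<forall>x\<in>A. continuous (at x within (A \<inter> {..x})) c"
    and c_theta: "c \<theta> = 0"
    and c_pos: "\<forall>x\<in>A. x > \<theta> \<longrightarrow> c x > 0"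
    and c_growth: "\<not> bdd_above A \<longrightarrow>
        filterlim (\<lambda>y. Inf {c x / x | x. x \<in> A \<and> x \<ge> y}) at_top at_top"
  shows "(\<forall>z\<in>{0..b}. ff A c \<sigma> b p z \<ge> 0)
    \<and> mono_on {0..b} (ff A c \<sigma> b p)
    \<and> strict_convex_on {0..b} (ff A c \<sigma> b p)
    \<and> C2_closed b (ff A c \<sigma> b p)
    \<and> (\<forall>z\<in>{0<..<b}.
          (\<exists>x\<in>A. gamma A c \<sigma> b p = (1/2) * \<sigma>\<^sup>2 * deriv (deriv (ff A c \<sigma> b p)) z
                                  - x * deriv (ff A c \<sigma> b p) z + c x)
        \<and> (\<forall>x\<in>A. gamma A c \<sigma> b p \<le> (1/2) * \<sigma>\<^sup>2 * deriv (deriv (ff A c \<sigma> b p)) z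
                                  - x * deriv (ff A c \<sigma> b p) z + c x))
    \<and> (ff A c \<sigma> b p has_real_derivative 0) (at_right 0)
    \<and> (ff A c \<sigma> b p has_real_derivative p) (at_left b)"
proof -
  interpret cost_function A c \<theta>
    using A_closed theta_min c_mono c_leftcont c_theta c_growth by unfold_locales auto
  interpret P: primitive_inverse "(1/2) * \<sigma>\<^sup>2" p "\<lambda>u. 1 / (phi A c u + gamma A c \<sigma> b p)"
    using primitive_inverse_gamma[OF p_pos b_pos sigma_pos] .
  have b: "P.Q p = b"
    unfolding P.Q_def by (rule gamma_spec(2)[OF p_pos b_pos sigma_pos])
  have "G A c \<sigma> b p = P.Q"
    by (rule ext) (simp only: G_def P.Q_def)
  then have "vinv A c \<sigma> b p = P.v"
    by (intro ext) (simp only: vinv_def P.v_def)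
  then have ff: "ff A c \<sigma> b p = P.f"
    by (intro ext) (simp only: ff_def P.f_def)
  have "(\<exists>x\<in>A. gamma A c \<sigma> b p = (1/2) * \<sigma>\<^sup>2 * deriv (deriv P.f) z - x * deriv P.f z + c x)
      \<and> (\<forall>x\<in>A. gamma A c \<sigma> b p \<le> (1/2) * \<sigma>\<^sup>2 * deriv (deriv P.f) z - x * deriv P.f z + c x)"
    if z: "z \<in> {0<..<b}" for z
  proof (rule min_attained_at_maximizer)
    show "0 \<le> P.v z"
      using P.Q_v z b by simp
    show "(1/2) * \<sigma>\<^sup>2 * deriv (deriv P.f) z - x * deriv P.f z + c x
        = gamma A c \<sigma> b p + (phi A c (P.v z) - (P.v z * x - c x))" for x
      using P.deriv_f P.deriv_deriv_f z b sigma_pos by (simp add: field_simps)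
  qed
  then show ?thesis
    unfolding ff using P.f_nonneg P.f_mono P.f_strict_convex P.f_C2_closed
      P.f_right_derivative_0 P.f_left_derivative_Q_p unfolding b by blast
qed

end
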